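(* Suppose $H$ satisfies (B1) and (B2), and for $\alpha>0$ let $v^\alpha$ be the viscosity solution of (DP) (satisfying $|v^\alpha|\le M/\alpha$, $M:=\sup|H(\cdot,0,\cdot)|$). Then there exist constants $M_1,M_2>0$, independent of $\alpha$, such that for all $\alpha>0$, $x,y\in\mathbb{T}^d$ and $\xi\in I$, $$\Big|\int_I k(\xi,\eta)\big(v^\alpha(x,\xi)-v^\alpha(y,\eta)\big)\,d\eta\Big|\le M_1+M_2\|Dv^\alpha\|_{L^\infty(\mathbb{T}^d\times I)}.$$
   Context: $I\subset\mathbb{R}$ finite interval, $|I|=1$; $k$ Borel measurable on $I\times I$ with $0<k_0\le k\le k_1$. $H\in C(\mathbb{T}^d\times\mathbb{R}^d)\otimes\mathcal{B}(I)$ with $H(\cdot,p,\cdot)$ bounded for each $p$. (DP): $\alpha v(x,\xi)+H(x,Dv(x,\xi),\xi)+\int_I k(\xi,\eta)(v(x,\xi)-v(x,\eta))d\eta=0$ in $\mathbb{T}^d\times I$ in the viscosity sense. (B1): $C_1|p|^m-C_2\le H(x,p,\xi)$ for constants $C_1,C_2>0$, $m>1$. (B2): for each $R>0$ a modulus $\omega_R$ with $|H(x,p,\xi)-H(y,p,\xi)|\le\omega_R(|x-y|)$ for $|p|\le R$. $v^\alpha(\cdot,\xi)$ is Lipschitz for each $\xi$, uniformly in $\xi$ (for fixed $\alpha$), so $\|Dv^\alpha\|_{L^\infty}$ is finite. *)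

theory Defs
  imports "HOL-Analysis.Analysis"
begin

text \<open>Torus T^d is represented by Z^d-periodic objects on real^'d.\<close>
definition int_vec :: "real^'d \<Rightarrow> bool" where
  "int_vec z \<longleftrightarrow> (\<forall>i. z $ i \<in> \<int>)"

definition periodic_x :: "(real^'d \<Rightarrow> 'b) \<Rightarrow> bool" where
  "periodic_x f \<longleftrightarrow> (\<forall>x z. int_vec z \<longrightarrow> f (x + z) = f x)"

definition modulus :: "(real \<Rightarrow> real) \<Rightarrow> bool" where
  "modulus \<omega> \<longleftrightarrow> \<omega> 0 = 0 \<and> (\<forall>r\<ge>0. \<omega> r \<ge> 0) \<and> mono_on {0..} \<omega> \<and> (\<omega> \<longlongrightarrow> 0) (at_right 0)"

definition C1_grad :: "(real^'d \<Rightarrow> real) \<Rightarrow> (real^'d \<Rightarrow> real^'d) \<Rightarrow> bool" where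
  "C1_grad \<phi> D\<phi> \<longleftrightarrow> (\<forall>x. (\<phi> has_derivative (\<lambda>h. D\<phi> x \<bullet> h)) (at x)) \<and> continuous_on UNIV D\<phi>"

definition coupling :: "real set \<Rightarrow> (real \<Rightarrow> real \<Rightarrow> real) \<Rightarrow> (real^'d \<Rightarrow> real \<Rightarrow> real) \<Rightarrow> real^'d \<Rightarrow> real \<Rightarrow> real" where
  "coupling I k v x \<xi> = (LINT \<eta>:I|lborel. k \<xi> \<eta> * (v x \<xi> - v x \<eta>))"

definition visc_sol_DP :: "real \<Rightarrow> (real^'d \<Rightarrow> real^'d \<Rightarrow> real \<Rightarrow> real) \<Rightarrow> real set \<Rightarrow>
    (real \<Rightarrow> real \<Rightarrow> real) \<Rightarrow> (real^'d \<Rightarrow> real \<Rightarrow> real) \<Rightarrow> bool" where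
  "visc_sol_DP \<alpha> H I k v \<longleftrightarrow>
     (\<forall>\<xi>. periodic_x (\<lambda>x. v x \<xi>)) \<and>
     (\<forall>\<xi>\<in>I. continuous_on UNIV (\<lambda>x. v x \<xi>)) \<and>
     (\<forall>x. set_borel_measurable lborel I (v x)) \<and>
     (\<forall>\<xi>\<in>I. \<forall>\<phi> D\<phi> x0. C1_grad \<phi> D\<phi> \<longrightarrow>
        (\<exists>e>0. \<forall>y. dist y x0 < e \<longrightarrow> v y \<xi> - \<phi> y \<le> v x0 \<xi> - \<phi> x0) \<longrightarrow>
        \<alpha> * v x0 \<xi> + H x0 (D\<phi> x0) \<xi> + coupling I k v x0 \<xi> \<le> 0) \<and>
     (\<forall>\<xi>\<in>I. \<forall>\<phi> D\<phi> x0. C1_grad \<phi> D\<phi> \<longrightarrow>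
        (\<exists>e>0. \<forall>y. dist y x0 < e \<longrightarrow> v y \<xi> - \<phi> y \<ge> v x0 \<xi> - \<phi> x0) \<longrightarrow>
        \<alpha> * v x0 \<xi> + H x0 (D\<phi> x0) \<xi> + coupling I k v x0 \<xi> \<ge> 0)"

text \<open>Pointwise norm of the spatial gradient (0 where not differentiable; a null set).\<close>
definition grad_norm :: "(real^'d \<Rightarrow> real \<Rightarrow> real) \<Rightarrow> (real^'d) \<times> real \<Rightarrow> real" where
  "grad_norm v z = (if (\<lambda>x. v x (snd z)) differentiable (at (fst z))
      then onorm (frechet_derivative (\<lambda>x. v x (snd z)) (at (fst z))) else 0)"

text \<open>L-infinity norm of Dv on T^d x I (essential supremum w.r.t. Lebesgue measure;
  by periodicity the ess sup over R^d x I equals that over T^d x I).\<close>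
definition Linf_Dv :: "real set \<Rightarrow> (real^'d \<Rightarrow> real \<Rightarrow> real) \<Rightarrow> ereal" where
  "Linf_Dv I v = Inf {C. AE z in (lborel \<Otimes>\<^sub>M restrict_space lborel I). ereal (grad_norm v z) \<le> C}"

end

theory Submission
  imports Defs
begin

text \<open>Testing the subsolution inequality with \<open>\<phi> = 0\<close> at a maximum point \<open>x\<^sub>0\<close> of
  \<open>v(\<cdot>,\<xi>)\<close> gives a coupling of at most \<open>2M\<close> there, since \<open>|\<alpha> v| \<le> M\<close> and \<open>|H(\<cdot>,0,\<cdot>)| \<le> M\<close>;
  symmetrically it is at least \<open>-2M\<close> at a minimum point. Moving from \<open>(x\<^sub>0,x\<^sub>0)\<close> to \<open>(x,y)\<close>
  changes the integrand by at most \<open>k\<^sub>1 \<Theta>\<close>, where \<open>\<Theta>\<close> is the oscillation of \<open>v\<close> in \<open>x\<close>, so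
  the integral is bounded by \<open>2M + k\<^sub>1 \<Theta>\<close>. The same inequality together with the coercivity
  (B1) bounds the gradients of test functions touching \<open>v(\<cdot>,\<eta>)\<close> from above by
  \<open>O((1 + \<Theta>)\<^bsup>1/m\<^esup>)\<close>, hence \<open>v(\<cdot>,\<eta>)\<close> is Lipschitz with such a constant, and periodicity gives
  \<open>\<Theta> \<le> C (1 + \<Theta>)\<^bsup>1/m\<^esup>\<close>. As \<open>m > 1\<close> this bounds \<open>\<Theta>\<close> independently of \<open>\<alpha>\<close>: the integral is in
  fact bounded by a constant, and the \<open>\<parallel>Dv\<parallel>\<^sub>\<infinity>\<close> term is only needed to be nonnegative.\<close>

lemma set_integrable_bounded:
  fixes f :: "'a \<Rightarrow> real"
  assumes "A \<in> sets M" "emeasure M A < \<infinity>" "set_borel_measurable M A f"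
    and bound: "\<And>x. x \<in> A \<Longrightarrow> \<bar>f x\<bar> \<le> B"
  shows "set_integrable M A f"
  unfolding set_integrable_def
  by (rule integrableI_bounded_set[where A=A and B=B])
    (use assms in \<open>auto simp: set_borel_measurable_def\<close>)

lemma set_borel_measurable_mult_diff:
  fixes g h :: "'a \<Rightarrow> real"
  assumes g: "g \<in> borel_measurable M" and h: "set_borel_measurable M A h" and A: "A \<in> sets M"
  shows "set_borel_measurable M A (\<lambda>x. g x * (c - h x))"
proof -
  have "(\<lambda>x. indicator A x *\<^sub>R (g x * (c - h x))) =
      (\<lambda>x. g x * (c * indicator A x - indicator A x *\<^sub>R h x))"
    by (auto simp: indicator_def fun_eq_iff)
  then show ?thesis
    using g h A unfolding set_borel_measurable_def by simp
qed

lemma set_integral_mono_add_const: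
  fixes f g :: "'a \<Rightarrow> real"
  assumes f: "set_integrable M A f" and g: "set_integrable M A g"
    and A: "A \<in> sets M" "emeasure M A < \<infinity>"
    and le: "\<And>x. x \<in> A \<Longrightarrow> f x \<le> g x + c"
  shows "(LINT x:A|M. f x) \<le> (LINT x:A|M. g x) + c * measure M A"
proof -
  have const: "set_integrable M A (\<lambda>_. c)"
    using A by (intro set_integrable_bounded[where B="\<bar>c\<bar>"]) (auto simp: set_borel_measurable_def)
  have "(LINT x:A|M. f x) \<le> (LINT x:A|M. g x + c)"
    using f set_integral_add(1)[OF g const] le by (rule set_integral_mono)
  also have "\<dots> = (LINT x:A|M. g x) + c * measure M A"
    using A by (simp add: set_integral_add(2)[OF g const] set_integral_const)
  finally show ?thesis .
qed

lemma int_vec_translate_unit_cube: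
  fixes u :: "real^'d"
  obtains z where "int_vec z" "\<And>i. 0 \<le> (u + z) $ i \<and> (u + z) $ i \<le> 1"
proof
  let ?z = "(\<chi> i. - of_int \<lfloor>u $ i\<rfloor>) :: real^'d"
  show "int_vec ?z" unfolding int_vec_def by auto
  show "0 \<le> (u + ?z) $ i \<and> (u + ?z) $ i \<le> 1" for i by simp linarith
qed

lemma periodic_x_translate_near:
  fixes f :: "real^'d \<Rightarrow> 'b"
  assumes "periodic_x f"
  obtains y' where "f y' = f y" "dist x y' \<le> real CARD('d)"
proof -
  obtain z where "int_vec z" and z: "\<And>i. 0 \<le> (x - y + z) $ i \<and> (x - y + z) $ i \<le> 1"
    using int_vec_translate_unit_cube by blast
  then have "int_vec (-z)" unfolding int_vec_def by simp
  then have "f (y + (-z)) = f y" using assms unfolding periodic_x_def by blast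
  moreover have "dist x (y + (-z)) \<le> real CARD('d)"
  proof -
    have "dist x (y + (-z)) = norm (x - y + z)" by (simp add: dist_norm algebra_simps)
    also have "\<dots> \<le> (\<Sum>i\<in>UNIV. \<bar>(x - y + z) $ i\<bar>)" by (rule norm_le_l1_cart)
    also have "\<dots> \<le> (\<Sum>i\<in>(UNIV::'d set). 1)" using z by (intro sum_mono) auto
    finally show ?thesis by simp
  qed
  ultimately show ?thesis by (rule that)
qed

lemma periodic_x_attains_max:
  fixes f :: "real^'d \<Rightarrow> real"
  assumes per: "periodic_x f" and cont: "continuous_on UNIV f"
  obtains x0 where "\<And>y. f y \<le> f x0"
proof -
  let ?K = "cbox (0::real^'d) (\<chi> i. 1)"
  have "(0::real^'d) \<in> ?K" by (auto simp: mem_box_cart)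
  then have "?K \<noteq> {}" by blast
  then obtain x0 where "\<forall>y\<in>?K. f y \<le> f x0"
    using continuous_attains_sup[of ?K f] cont by (auto intro: continuous_on_subset)
  moreover have "\<exists>y'\<in>?K. f y' = f y" for y
  proof -
    obtain z where "int_vec z" "\<And>i. 0 \<le> (y + z) $ i \<and> (y + z) $ i \<le> 1"
      using int_vec_translate_unit_cube by blast
    then show ?thesis
      using per unfolding periodic_x_def by (intro bexI[of _ "y + z"]) (auto simp: mem_box_cart)
  qed
  ultimately show ?thesis using that by metis
qed

lemma periodic_x_attains_min:
  fixes f :: "real^'d \<Rightarrow> real"
  assumes "periodic_x f" and "continuous_on UNIV f"
  obtains x1 where "\<And>y. f x1 \<le> f y"
proof -
  have "periodic_x (\<lambda>x. - f x)" using assms(1) unfolding periodic_x_def by simp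
  moreover have "continuous_on UNIV (\<lambda>x. - f x)" using assms(2) by (rule continuous_on_minus)
  ultimately obtain x1 where "\<And>y. - f y \<le> - f x1" by (rule periodic_x_attains_max) auto
  then show ?thesis by (intro that[of x1]) simp
qed

lemma grad_norm_nonneg: "0 \<le> grad_norm v z"
proof (cases "(\<lambda>x. v x (snd z)) differentiable (at (fst z))")
  case True
  then have "((\<lambda>x. v x (snd z)) has_derivative
      frechet_derivative (\<lambda>x. v x (snd z)) (at (fst z))) (at (fst z))"
    by (simp add: frechet_derivative_works[symmetric])
  then have "bounded_linear (frechet_derivative (\<lambda>x. v x (snd z)) (at (fst z)))"
    by (rule has_derivative_bounded_linear)
  then show ?thesis using True by (simp add: grad_norm_def onorm_pos_le)
qed (simp add: grad_norm_def)

lemma Linf_Dv_nonneg: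
  fixes v :: "real^'d \<Rightarrow> real \<Rightarrow> real"
  assumes I: "I \<in> sets lborel" "emeasure lborel I \<noteq> 0"
  shows "0 \<le> Linf_Dv I v"
  unfolding Linf_Dv_def
proof (rule Inf_greatest, clarify, rule ccontr)
  let ?N = "lborel \<Otimes>\<^sub>M restrict_space lborel I :: ((real^'d) \<times> real) measure"
  fix C assume "AE z in ?N. ereal (grad_norm v z) \<le> C" and "\<not> 0 \<le> C"
  then have "AE z in ?N. False"
    by (elim eventually_mono) (metis grad_norm_nonneg ereal_less_eq(5) order_trans)
  then have "emeasure ?N (space ?N) = 0"
    by (simp add: ae_filter_eq_bot_iff[symmetric] trivial_limit_def)
  moreover have "emeasure ?N (UNIV \<times> I) \<noteq> 0"
  proof -
    have "sigma_finite_measure (restrict_space lborel I)"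
      by (rule sigma_finite_measure_restrict_space) (use I(1) in \<open>auto intro: sigma_finite_lborel\<close>)
    then have "emeasure ?N (UNIV \<times> I) =
        emeasure lborel (UNIV::(real^'d) set) * emeasure (restrict_space lborel I) I"
      by (rule sigma_finite_measure.emeasure_pair_measure_Times) (auto simp: sets_restrict_space)
    also have "\<dots> \<noteq> 0" using I by (simp add: emeasure_restrict_space)
    finally show ?thesis .
  qed
  moreover have "space ?N = UNIV \<times> I" by (simp add: space_pair_measure space_restrict_space)
  ultimately show False by simp
qed

lemma le_of_sublinear_self_bound:
  fixes t a b c e m :: real
  assumes "0 \<le> t" "0 \<le> a" "0 \<le> b" "0 < c" "0 \<le> e" "1 < m"
    and self_bound: "t \<le> a + b * (c + e * t) powr (1 / m)"
  shows "t \<le> a + b * max 1 ((c + e * a + e * b) powr (1 / (m - 1)))"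
proof -
  define q where "q = (c + e * t) powr (1 / m)"
  define P where "P = c + e * a + e * b"
  have "0 < c + e * t" using assms by (simp add: add_pos_nonneg)
  then have q_pos: "0 < q" and q_pow: "q powr m = c + e * t"
    unfolding q_def using \<open>1 < m\<close> by (simp_all add: powr_powr)
  have "q \<le> max 1 (P powr (1 / (m - 1)))"
  proof (cases "q \<le> 1")
    case False
    have "q powr (m - 1) * q = q powr ((m - 1) + 1)"
      using q_pos by (simp only: powr_add powr_one_gt_zero_iff) simp
    also have "\<dots> = q powr m" by simp
    also have "\<dots> \<le> c + e * (a + b * q)"
      using q_pow self_bound \<open>0 \<le> e\<close> unfolding q_def by (simp add: mult_left_mono)
    also have "\<dots> \<le> P * q"
      using False assms(2-5) mult_left_mono[of 1 q "c + e * a"]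
      unfolding P_def by (simp add: algebra_simps)
    finally have "q powr (m - 1) \<le> P" using q_pos by simp
    then have "(q powr (m - 1)) powr (1 / (m - 1)) \<le> P powr (1 / (m - 1))"
      using \<open>1 < m\<close> by (intro powr_mono2) auto
    then show ?thesis using q_pos \<open>1 < m\<close> by (simp add: powr_powr)
  qed simp
  then have "b * q \<le> b * max 1 (P powr (1 / (m - 1)))" using \<open>0 \<le> b\<close> by (rule mult_left_mono)
  then show ?thesis using self_bound unfolding q_def P_def by simp
qed

lemma C1_grad_smoothed_cone:
  fixes y :: "real^'d"
  assumes "0 < \<delta>"
  shows "C1_grad (\<lambda>z. c * sqrt ((z - y) \<bullet> (z - y) + \<delta>\<^sup>2))
                 (\<lambda>z. (c / sqrt ((z - y) \<bullet> (z - y) + \<delta>\<^sup>2)) *\<^sub>R (z - y))"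
  unfolding C1_grad_def
proof (intro conjI allI)
  have pos: "0 < (z - y) \<bullet> (z - y) + \<delta>\<^sup>2" for z using assms by (simp add: add_nonneg_pos)
  fix x :: "real^'d"
  show "((\<lambda>z. c * sqrt ((z - y) \<bullet> (z - y) + \<delta>\<^sup>2)) has_derivative
        (\<lambda>h. (c / sqrt ((x - y) \<bullet> (x - y) + \<delta>\<^sup>2)) *\<^sub>R (x - y) \<bullet> h)) (at x)"
    using pos[of x]
    apply (auto intro!: derivative_eq_intros simp: inner_commute)
    by (simp add: fun_eq_iff divide_inverse)
  show "continuous_on UNIV (\<lambda>z. (c / sqrt ((z - y) \<bullet> (z - y) + \<delta>\<^sup>2)) *\<^sub>R (z - y))"
    using pos by (intro continuous_intros) (simp add: less_imp_neq[symmetric])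
qed

lemma bounded_minus_coercive_attains_max:
  fixes w \<phi> :: "'a::heine_borel \<Rightarrow> real"
  assumes "continuous_on UNIV w" "continuous_on UNIV \<phi>" and bound: "\<And>z. \<bar>w z\<bar> \<le> B"
    and "0 < c" and coercive: "\<And>z. c * dist z y \<le> \<phi> z"
  obtains z0 where "\<And>z. w z - \<phi> z \<le> w z0 - \<phi> z0"
proof -
  define R where "R = max 0 ((2 * B + \<phi> y) / c)"
  have "continuous_on (cball y R) (\<lambda>z. w z - \<phi> z)"
    using continuous_on_subset[OF assms(1)] continuous_on_subset[OF assms(2)]
    by (intro continuous_on_diff) auto
  moreover have "cball y R \<noteq> {}" by (simp add: R_def)
  ultimately obtain z0 where max_on_ball: "\<forall>z\<in>cball y R. w z - \<phi> z \<le> w z0 - \<phi> z0"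
    using continuous_attains_sup[OF compact_cball] by blast
  have "w z - \<phi> z \<le> w z0 - \<phi> z0" for z
  proof (cases "z \<in> cball y R")
    case False
    then have "(2 * B + \<phi> y) / c < dist z y" by (simp add: R_def dist_commute)
    then have "2 * B + \<phi> y < c * dist z y" using \<open>0 < c\<close> by (simp add: pos_divide_less_eq mult.commute)
    then have "w z - \<phi> z \<le> w y - \<phi> y"
      using coercive[of z] bound[of z] bound[of y] by (auto simp: abs_le_iff)
    also have "\<dots> \<le> w z0 - \<phi> z0" using max_on_ball by (simp add: R_def)
    finally show ?thesis .
  qed (use max_on_ball in blast)
  then show ?thesis by (rule that)
qed

text \<open>If \<open>v\<close> is touched from above by \<open>\<phi>\<close> at a point where \<open>|D\<phi>| \<le> \<beta>\<close>, the touching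
  point of a cone of slope \<open>2\<beta> + 1\<close> smoothed at scale \<open>\<delta>\<close> must lie within \<open>\<delta>\<close> of its vertex.\<close>

lemma smoothed_cone_slope_le_imp_less:
  fixes r \<delta> \<beta> :: real
  assumes "0 \<le> r" "0 < \<delta>" "0 \<le> \<beta>"
    and slope: "(2 * \<beta> + 1) * r / sqrt (r\<^sup>2 + \<delta>\<^sup>2) \<le> \<beta>"
  shows "r < \<delta>"
proof -
  define s where "s = sqrt (r\<^sup>2 + \<delta>\<^sup>2)"
  have "0 < s" unfolding s_def using assms by (simp add: add_nonneg_pos)
  then have "(2 * \<beta> + 1) * r \<le> \<beta> * s" using slope unfolding s_def by (simp add: field_simps)
  then have "(2 * \<beta> + 1) * (2 * r) < (2 * \<beta> + 1) * s"
    using \<open>0 < s\<close> by (simp add: algebra_simps)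
  then have "2 * r < s" using \<open>0 \<le> \<beta>\<close> by (simp add: mult_less_cancel_left_pos)
  then have "(2 * r)\<^sup>2 < s\<^sup>2" using \<open>0 \<le> r\<close> by (intro power_strict_mono) auto
  then have "3 * r\<^sup>2 < \<delta>\<^sup>2" unfolding s_def by (simp add: power_mult_distrib)
  then have "r\<^sup>2 < \<delta>\<^sup>2" by (smt (verit) zero_le_power2)
  then show ?thesis using assms(1,2) by (simp add: power_less_imp_less_base)
qed

lemma smoothed_cone_touching_estimate:
  fixes w :: "real^'d \<Rightarrow> real"
  assumes lip: "L-lipschitz_on UNIV w" and bound: "\<And>z. \<bar>w z\<bar> \<le> B" and "0 \<le> \<beta>" and "0 < \<delta>"
    and grad_bound: "\<And>\<phi> D\<phi> z0. C1_grad \<phi> D\<phi> \<Longrightarrow> (\<And>z. w z - \<phi> z \<le> w z0 - \<phi> z0) \<Longrightarrow>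
      norm (D\<phi> z0) \<le> \<beta>"
  shows "w x - w y \<le> (2 * \<beta> + 1) * dist x y + L * \<delta>"
proof -
  define c where "c = 2 * \<beta> + 1"
  have "0 < c" using \<open>0 \<le> \<beta>\<close> by (simp add: c_def)
  define \<phi> where "\<phi> = (\<lambda>z. c * sqrt ((z - y) \<bullet> (z - y) + \<delta>\<^sup>2))"
  define D\<phi> where "D\<phi> = (\<lambda>z. (c / sqrt ((z - y) \<bullet> (z - y) + \<delta>\<^sup>2)) *\<^sub>R (z - y))"
  have "C1_grad \<phi> D\<phi>" unfolding \<phi>_def D\<phi>_def using \<open>0 < \<delta>\<close> by (rule C1_grad_smoothed_cone)
  have inner_dist: "(z - y) \<bullet> (z - y) = (dist z y)\<^sup>2" for z
    by (simp add: dist_norm power2_norm_eq_inner)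
  have \<phi>_eq: "\<phi> z = c * sqrt ((dist z y)\<^sup>2 + \<delta>\<^sup>2)" for z unfolding \<phi>_def inner_dist ..
  have "c * dist z y \<le> \<phi> z" for z
    unfolding \<phi>_eq using \<open>0 < c\<close> by (intro mult_left_mono) (auto intro: real_le_rsqrt)
  moreover have "continuous_on UNIV \<phi>" unfolding \<phi>_def by (intro continuous_intros)
  ultimately obtain z0 where max: "\<And>z. w z - \<phi> z \<le> w z0 - \<phi> z0"
    using bounded_minus_coercive_attains_max[OF lipschitz_on_continuous_on[OF lip] _ bound \<open>0 < c\<close>]
    by blast
  have "norm (D\<phi> z0) \<le> \<beta>" by (rule grad_bound[OF \<open>C1_grad \<phi> D\<phi>\<close> max])
  moreover have "norm (D\<phi> z0) = c * dist z0 y / sqrt ((dist z0 y)\<^sup>2 + \<delta>\<^sup>2)"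
    unfolding D\<phi>_def inner_dist using \<open>0 < c\<close> by (simp add: dist_norm)
  ultimately have "dist z0 y < \<delta>"
    using smoothed_cone_slope_le_imp_less[of "dist z0 y" \<delta> \<beta>] \<open>0 < \<delta>\<close> \<open>0 \<le> \<beta>\<close>
    unfolding c_def by simp
  then have "w z0 - w y \<le> L * \<delta>"
    using lipschitz_onD[OF lip, of z0 y] lipschitz_on_nonneg[OF lip]
    by (smt (verit, best) UNIV_I dist_real_def mult_left_mono)
  moreover have "\<phi> x \<le> c * (dist x y + \<delta>)"
  proof -
    have "sqrt ((dist x y)\<^sup>2 + \<delta>\<^sup>2) \<le> sqrt ((dist x y + \<delta>)\<^sup>2)"
      using \<open>0 < \<delta>\<close> by (intro real_sqrt_le_mono) (simp add: power2_sum)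
    then show ?thesis unfolding \<phi>_eq using \<open>0 < c\<close> \<open>0 < \<delta>\<close> by simp
  qed
  moreover have "c * \<delta> \<le> \<phi> z0"
    unfolding \<phi>_eq using \<open>0 < c\<close> \<open>0 < \<delta>\<close> by (intro mult_left_mono) (auto intro: real_le_rsqrt)
  moreover have "w x - \<phi> x \<le> w z0 - \<phi> z0" by (rule max)
  ultimately show ?thesis unfolding c_def by (simp add: algebra_simps)
qed

lemma lipschitz_from_touching_gradient_bound:
  fixes w :: "real^'d \<Rightarrow> real"
  assumes lip: "L-lipschitz_on UNIV w" and bound: "\<And>z. \<bar>w z\<bar> \<le> B" and "0 \<le> \<beta>"
    and grad_bound: "\<And>\<phi> D\<phi> z0. C1_grad \<phi> D\<phi> \<Longrightarrow> (\<And>z. w z - \<phi> z \<le> w z0 - \<phi> z0) \<Longrightarrow>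
      norm (D\<phi> z0) \<le> \<beta>"
  shows "w x - w y \<le> (2 * \<beta> + 1) * dist x y"
proof (rule field_le_epsilon)
  have "0 \<le> L" using lip by (rule lipschitz_on_nonneg)
  fix e :: real assume "0 < e"
  then have "w x - w y \<le> (2 * \<beta> + 1) * dist x y + L * (e / (L + 1))"
    using smoothed_cone_touching_estimate[OF lip bound \<open>0 \<le> \<beta>\<close>, of "e / (L + 1)"] grad_bound
      \<open>0 \<le> L\<close> by simp
  also have "L * (e / (L + 1)) \<le> e" using \<open>0 < e\<close> \<open>0 \<le> L\<close> by (simp add: field_simps)
  finally show "w x - w y \<le> (2 * \<beta> + 1) * dist x y + e" by simp
qed

locale DP_solution =
  fixes I :: "real set" and a b :: real
    and k :: "real \<Rightarrow> real \<Rightarrow> real" and k1 :: real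
    and H :: "real^'d \<Rightarrow> real^'d \<Rightarrow> real \<Rightarrow> real" and M C1 C2 m :: real
    and \<alpha> :: real and v :: "real^'d \<Rightarrow> real \<Rightarrow> real" and L :: real
  assumes I_eq: "I = {a..b}" and I_length: "b - a = 1"
    and k_measurable: "\<And>\<xi>. k \<xi> \<in> borel_measurable borel"
    and k_nonneg: "\<And>\<xi> \<eta>. \<xi> \<in> I \<Longrightarrow> \<eta> \<in> I \<Longrightarrow> 0 \<le> k \<xi> \<eta>"
    and k_le: "\<And>\<xi> \<eta>. \<xi> \<in> I \<Longrightarrow> \<eta> \<in> I \<Longrightarrow> k \<xi> \<eta> \<le> k1"
    and H_zero_bound: "\<And>x \<xi>. \<xi> \<in> I \<Longrightarrow> \<bar>H x 0 \<xi>\<bar> \<le> M"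
    and H_coercive: "\<And>x p \<xi>. \<xi> \<in> I \<Longrightarrow> C1 * norm p powr m - C2 \<le> H x p \<xi>"
    and C1_pos: "0 < C1" and C2_pos: "0 < C2" and m_gt_1: "1 < m"
    and \<alpha>_pos: "0 < \<alpha>"
    and solution: "visc_sol_DP \<alpha> H I k v"
    and v_bound: "\<And>x \<xi>. \<xi> \<in> I \<Longrightarrow> \<bar>v x \<xi>\<bar> \<le> M / \<alpha>"
    and v_lipschitz: "\<And>\<xi>. \<xi> \<in> I \<Longrightarrow> L-lipschitz_on UNIV (\<lambda>x. v x \<xi>)"
begin

lemma a_in_I: "a \<in> I"
  using I_eq I_length by simp

lemma measure_I: "measure lborel I = 1"
  using I_eq I_length by simp

lemma M_nonneg: "0 \<le> M"
  using H_zero_bound[OF a_in_I, of 0] by linarith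

lemma k1_nonneg: "0 \<le> k1"
  using k_nonneg k_le a_in_I by (meson order_trans)

lemma \<alpha>_v_bound: "\<xi> \<in> I \<Longrightarrow> \<bar>\<alpha> * v x \<xi>\<bar> \<le> M"
  using v_bound[of \<xi> x] \<alpha>_pos by (simp add: abs_mult field_simps)

lemma v_periodic: "periodic_x (\<lambda>x. v x \<xi>)"
  and v_continuous: "\<xi> \<in> I \<Longrightarrow> continuous_on UNIV (\<lambda>x. v x \<xi>)"
  and v_measurable: "set_borel_measurable lborel I (v x)"
  using solution unfolding visc_sol_DP_def by blast+

text \<open>Test functions are only ever used at global extrema, which are in particular local ones.\<close>

lemma subsolution_at_max:
  assumes "\<xi> \<in> I" "C1_grad \<phi> D\<phi>" "\<And>y. v y \<xi> - \<phi> y \<le> v x0 \<xi> - \<phi> x0"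
  shows "\<alpha> * v x0 \<xi> + H x0 (D\<phi> x0) \<xi> + coupling I k v x0 \<xi> \<le> 0"
  using solution assms unfolding visc_sol_DP_def by (meson zero_less_one)

lemma supersolution_at_min:
  assumes "\<xi> \<in> I" "C1_grad \<phi> D\<phi>" "\<And>y. v x0 \<xi> - \<phi> x0 \<le> v y \<xi> - \<phi> y"
  shows "0 \<le> \<alpha> * v x0 \<xi> + H x0 (D\<phi> x0) \<xi> + coupling I k v x0 \<xi>"
  using solution assms unfolding visc_sol_DP_def by (meson zero_less_one)

lemma C1_grad_zero: "C1_grad (\<lambda>_. 0) (\<lambda>_. 0 :: real^'d)"
proof -
  have zero: "(\<lambda>h. (0::real^'d) \<bullet> h) = (\<lambda>_. 0)" by (simp add: fun_eq_iff)
  show ?thesis unfolding C1_grad_def zero by simp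
qed

definition mixed_coupling :: "real \<Rightarrow> real^'d \<Rightarrow> real^'d \<Rightarrow> real" where
  "mixed_coupling \<xi> x y = (LINT \<eta>:I|lborel. k \<xi> \<eta> * (v x \<xi> - v y \<eta>))"

lemma coupling_eq_mixed_coupling: "coupling I k v x \<xi> = mixed_coupling \<xi> x x"
  unfolding coupling_def mixed_coupling_def ..

definition osc :: real where
  "osc = Sup {v x \<eta> - v y \<eta> | x y \<eta>. \<eta> \<in> I}"

lemma le_osc: "\<eta> \<in> I \<Longrightarrow> v x \<eta> - v y \<eta> \<le> osc"
  unfolding osc_def
proof (rule cSup_upper)
  show "bdd_above {v x \<eta> - v y \<eta> | x y \<eta>. \<eta> \<in> I}"
  proof (rule bdd_aboveI[of _ "2 * M / \<alpha>"], clarify)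
    fix x y \<eta> assume "\<eta> \<in> I"
    then show "v x \<eta> - v y \<eta> \<le> 2 * M / \<alpha>" using v_bound[of \<eta> x] v_bound[of \<eta> y] by (auto simp: abs_le_iff)
  qed
qed auto

lemma osc_nonneg: "0 \<le> osc"
  using le_osc[OF a_in_I, of 0 0] by simp

lemma mixed_coupling_integrable:
  assumes "\<xi> \<in> I"
  shows "set_integrable lborel I (\<lambda>\<eta>. k \<xi> \<eta> * (v x \<xi> - v y \<eta>))"
proof (rule set_integrable_bounded[where B="k1 * (\<bar>v x \<xi>\<bar> + M / \<alpha>)"])
  show "I \<in> sets lborel" "emeasure lborel I < \<infinity>" using I_eq I_length by auto
  show "set_borel_measurable lborel I (\<lambda>\<eta>. k \<xi> \<eta> * (v x \<xi> - v y \<eta>))"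
    using k_measurable v_measurable I_eq by (intro set_borel_measurable_mult_diff) auto
  fix \<eta> assume "\<eta> \<in> I"
  have "\<bar>v x \<xi> - v y \<eta>\<bar> \<le> \<bar>v x \<xi>\<bar> + M / \<alpha>"
    using v_bound[OF \<open>\<eta> \<in> I\<close>, of y] by linarith
  then show "\<bar>k \<xi> \<eta> * (v x \<xi> - v y \<eta>)\<bar> \<le> k1 * (\<bar>v x \<xi>\<bar> + M / \<alpha>)"
    using k_nonneg[OF assms \<open>\<eta> \<in> I\<close>] k_le[OF assms \<open>\<eta> \<in> I\<close>]
    by (simp add: abs_mult mult_mono)
qed

lemma mixed_coupling_le:
  assumes "\<xi> \<in> I" "v x \<xi> \<le> v x' \<xi>"
  shows "mixed_coupling \<xi> x y \<le> mixed_coupling \<xi> x' y' + k1 * osc"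
proof -
  have "k \<xi> \<eta> * (v x \<xi> - v y \<eta>) \<le> k \<xi> \<eta> * (v x' \<xi> - v y' \<eta>) + k1 * osc" if "\<eta> \<in> I" for \<eta>
  proof -
    have "k \<xi> \<eta> * (v x \<xi> - v y \<eta>) \<le> k \<xi> \<eta> * ((v x' \<xi> - v y' \<eta>) + osc)"
      using assms(2) le_osc[OF that, of y' y] k_nonneg[OF assms(1) that]
      by (intro mult_left_mono) auto
    also have "\<dots> \<le> k \<xi> \<eta> * (v x' \<xi> - v y' \<eta>) + k1 * osc"
      using k_le[OF assms(1) that] osc_nonneg by (simp add: distrib_left mult_right_mono)
    finally show ?thesis .
  qed
  then show ?thesis
    unfolding mixed_coupling_def
    using set_integral_mono_add_const[of lborel I "\<lambda>\<eta>. k \<xi> \<eta> * (v x \<xi> - v y \<eta>)"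
        "\<lambda>\<eta>. k \<xi> \<eta> * (v x' \<xi> - v y' \<eta>)" "k1 * osc"]
      mixed_coupling_integrable[OF assms(1)] I_eq I_length measure_I
    by auto
qed

lemma abs_mixed_coupling_le:
  assumes "\<xi> \<in> I"
  shows "\<bar>mixed_coupling \<xi> x y\<bar> \<le> 2 * M + k1 * osc"
proof -
  obtain x0 where x0: "\<And>z. v z \<xi> \<le> v x0 \<xi>"
    using periodic_x_attains_max[OF v_periodic v_continuous[OF assms]] by blast
  obtain x1 where x1: "\<And>z. v x1 \<xi> \<le> v z \<xi>"
    using periodic_x_attains_min[OF v_periodic v_continuous[OF assms]] by blast
  have "coupling I k v x0 \<xi> \<le> 2 * M"
    using subsolution_at_max[OF assms C1_grad_zero, of x0] x0 \<alpha>_v_bound[OF assms, of x0]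
      H_zero_bound[OF assms, of x0]
    by (simp add: abs_le_iff)
  moreover have "- 2 * M \<le> coupling I k v x1 \<xi>"
    using supersolution_at_min[OF assms C1_grad_zero, of x1] x1 \<alpha>_v_bound[OF assms, of x1]
      H_zero_bound[OF assms, of x1]
    by (simp add: abs_le_iff)
  moreover have "mixed_coupling \<xi> x y \<le> mixed_coupling \<xi> x0 x0 + k1 * osc"
    using assms x0 by (rule mixed_coupling_le)
  moreover have "mixed_coupling \<xi> x1 x1 \<le> mixed_coupling \<xi> x y + k1 * osc"
    using assms x1 by (rule mixed_coupling_le)
  ultimately show ?thesis unfolding coupling_eq_mixed_coupling by (simp add: abs_le_iff)
qed

lemma touching_gradient_bound:
  assumes "\<eta> \<in> I" "C1_grad \<phi> D\<phi>" "\<And>z. v z \<eta> - \<phi> z \<le> v z0 \<eta> - \<phi> z0"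
  shows "norm (D\<phi> z0) \<le> ((C2 + 3 * M + k1 * osc) / C1) powr (1 / m)"
proof -
  have "C1 * norm (D\<phi> z0) powr m \<le> C2 + 3 * M + k1 * osc"
    using subsolution_at_max[OF assms] H_coercive[OF assms(1), where x=z0 and p="D\<phi> z0"]
      \<alpha>_v_bound[OF assms(1), of z0] abs_mixed_coupling_le[OF assms(1), of z0 z0]
    unfolding coupling_eq_mixed_coupling by (simp add: abs_le_iff)
  then have "norm (D\<phi> z0) powr m \<le> (C2 + 3 * M + k1 * osc) / C1"
    using C1_pos by (simp add: field_simps)
  then have "(norm (D\<phi> z0) powr m) powr (1 / m) \<le> ((C2 + 3 * M + k1 * osc) / C1) powr (1 / m)"
    using m_gt_1 by (intro powr_mono2) auto
  then show ?thesis using m_gt_1 by (simp add: powr_powr)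
qed

lemma v_lipschitz_estimate:
  assumes "\<eta> \<in> I"
  shows "v x \<eta> - v y \<eta> \<le> (2 * ((C2 + 3 * M + k1 * osc) / C1) powr (1 / m) + 1) * dist x y"
  using v_lipschitz[OF assms] v_bound[OF assms]
  by (rule lipschitz_from_touching_gradient_bound) (auto intro: touching_gradient_bound[OF assms])

lemma osc_self_bound:
  defines "D \<equiv> real CARD('d)"
  shows "osc \<le> D + 2 * D * ((C2 + 3 * M) / C1 + k1 / C1 * osc) powr (1 / m)"
proof -
  define lip where "lip = 2 * ((C2 + 3 * M + k1 * osc) / C1) powr (1 / m) + 1"
  have "osc \<le> lip * D"
    unfolding osc_def
  proof (rule cSup_least)
    show "{v x \<eta> - v y \<eta> | x y \<eta>. \<eta> \<in> I} \<noteq> {}" using a_in_I by blast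
    fix s assume "s \<in> {v x \<eta> - v y \<eta> | x y \<eta>. \<eta> \<in> I}"
    then obtain x y \<eta> where s: "s = v x \<eta> - v y \<eta>" and "\<eta> \<in> I" by blast
    obtain y' where "v y' \<eta> = v y \<eta>" "dist x y' \<le> D"
      unfolding D_def using periodic_x_translate_near[OF v_periodic] by blast
    moreover have "0 \<le> lip" by (simp add: lip_def)
    ultimately show "s \<le> lip * D"
      using v_lipschitz_estimate[OF \<open>\<eta> \<in> I\<close>, of x y'] unfolding s lip_def[symmetric]
      by (smt (verit) mult_left_mono)
  qed
  also have "lip * D = D + 2 * D * ((C2 + 3 * M) / C1 + k1 / C1 * osc) powr (1 / m)"
    by (simp add: lip_def add_divide_distrib algebra_simps)
  finally show ?thesis .
qed

lemma osc_le:
  defines "D \<equiv> real CARD('d)"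
  shows "osc \<le> D + 2 * D * max 1 (((C2 + 3 * M) / C1 + k1 / C1 * D + k1 / C1 * (2 * D))
                                  powr (1 / (m - 1)))"
proof (rule le_of_sublinear_self_bound[OF osc_nonneg _ _ _ _ m_gt_1])
  show "0 \<le> D" "0 \<le> 2 * D" by (simp_all add: D_def)
  show "0 < (C2 + 3 * M) / C1" using C1_pos C2_pos M_nonneg by simp
  show "0 \<le> k1 / C1" using C1_pos k1_nonneg by simp
  show "osc \<le> D + 2 * D * ((C2 + 3 * M) / C1 + k1 / C1 * osc) powr (1 / m)"
    unfolding D_def by (rule osc_self_bound)
qed

lemma abs_mixed_coupling_le_uniform:
  defines "D \<equiv> real CARD('d)"
  assumes "\<xi> \<in> I"
  shows "\<bar>mixed_coupling \<xi> x y\<bar> \<le> 2 * M + k1 * (D + 2 * D * max 1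
           (((C2 + 3 * M) / C1 + k1 / C1 * D + k1 / C1 * (2 * D)) powr (1 / (m - 1))))"
  using abs_mixed_coupling_le[OF assms(2), of x y] mult_left_mono[OF osc_le k1_nonneg]
  unfolding D_def by linarith

end

lemma DP_solutionI:
  fixes H :: "real^'d \<Rightarrow> real^'d \<Rightarrow> real \<Rightarrow> real" and v :: "real^'d \<Rightarrow> real \<Rightarrow> real"
  assumes I: "I = {a..b}" "b - a = 1"
    and M: "M = (SUP z\<in>(UNIV :: (real^'d) set) \<times> I. \<bar>H (fst z) 0 (snd z)\<bar>)"
    and k_meas: "(\<lambda>p. k (fst p) (snd p)) \<in> borel_measurable (borel :: (real \<times> real) measure)"
    and k_bounds: "0 < k0" "\<forall>\<xi>\<in>I. \<forall>\<eta>\<in>I. k0 \<le> k \<xi> \<eta> \<and> k \<xi> \<eta> \<le> k1"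
    and H_bdd: "\<forall>p. \<exists>C. \<forall>x. \<forall>\<xi>\<in>I. \<bar>H x p \<xi>\<bar> \<le> C"
    and coercive: "0 < C1" "0 < C2" "1 < m" "\<forall>x p. \<forall>\<xi>\<in>I. C1 * norm p powr m - C2 \<le> H x p \<xi>"
    and solution: "0 < \<alpha>" "visc_sol_DP \<alpha> H I k v" "\<forall>x. \<forall>\<xi>\<in>I. \<bar>v x \<xi>\<bar> \<le> M / \<alpha>"
      "\<forall>\<xi>\<in>I. L-lipschitz_on UNIV (\<lambda>x. v x \<xi>)"
  shows "DP_solution I a b k k1 H M C1 C2 m \<alpha> v L"
proof
  show "k \<xi> \<in> borel_measurable borel" for \<xi>
    using measurable_Pair2[of "\<lambda>p. k (fst p) (snd p)" borel borel borel \<xi>] k_meas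
    by (simp add: borel_prod)
  show "0 \<le> k \<xi> \<eta>" "k \<xi> \<eta> \<le> k1" if "\<xi> \<in> I" "\<eta> \<in> I" for \<xi> \<eta>
    using k_bounds that by force+
  show "\<bar>H x 0 \<xi>\<bar> \<le> M" if "\<xi> \<in> I" for x \<xi>
  proof -
    obtain C where "\<forall>x. \<forall>\<xi>\<in>I. \<bar>H x 0 \<xi>\<bar> \<le> C" using H_bdd by blast
    then have "bdd_above ((\<lambda>z. \<bar>H (fst z) 0 (snd z)\<bar>) ` (UNIV \<times> I))" by (auto simp: bdd_above_def)
    then show ?thesis unfolding M using that by (intro cSUP_upper2[of _ _ "(x, \<xi>)"]) auto
  qed
  show "C1 * norm p powr m - C2 \<le> H x p \<xi>" if "\<xi> \<in> I" for x p \<xi> using that coercive by blast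
  show "\<bar>v x \<xi>\<bar> \<le> M / \<alpha>" if "\<xi> \<in> I" for x \<xi> using that solution by blast
  show "L-lipschitz_on UNIV (\<lambda>x. v x \<xi>)" if "\<xi> \<in> I" for \<xi> using that solution by blast
qed (use I coercive solution in auto)

theorem mainTheorem6:
  fixes H :: "real^'d \<Rightarrow> real^'d \<Rightarrow> real \<Rightarrow> real"
    and k :: "real \<Rightarrow> real \<Rightarrow> real"
    and a b k0 k1 :: real
  defines "I \<equiv> {a..b}"
  defines "M \<equiv> (SUP z\<in>(UNIV :: (real^'d) set) \<times> I. \<bar>H (fst z) 0 (snd z)\<bar>)"
  assumes I_len: "b - a = 1"
    and k_meas: "(\<lambda>p. k (fst p) (snd p)) \<in> borel_measurable (borel :: (real \<times> real) measure)"
    and k0_pos: "0 < k0"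
    and k_bounds: "\<forall>\<xi>\<in>I. \<forall>\<eta>\<in>I. k0 \<le> k \<xi> \<eta> \<and> k \<xi> \<eta> \<le> k1"
    and H_cont: "\<forall>\<xi>\<in>I. continuous_on UNIV (\<lambda>(x, p). H x p \<xi>)"
    and H_meas: "\<forall>x p. set_borel_measurable lborel I (H x p)"
    and H_per: "\<forall>p \<xi>. periodic_x (\<lambda>x. H x p \<xi>)"
    and H_bdd: "\<forall>p. \<exists>C. \<forall>x. \<forall>\<xi>\<in>I. \<bar>H x p \<xi>\<bar> \<le> C"
    and B1: "\<exists>C1 C2 m. C1 > 0 \<and> C2 > 0 \<and> m > 1 \<and>
               (\<forall>x p. \<forall>\<xi>\<in>I. C1 * norm p powr m - C2 \<le> H x p \<xi>)"
    and B2: "\<forall>R>0. \<exists>\<omega>. modulus \<omega> \<and>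
               (\<forall>x y p. \<forall>\<xi>\<in>I. norm p \<le> R \<longrightarrow> \<bar>H x p \<xi> - H y p \<xi>\<bar> \<le> \<omega> (dist x y))"
  shows "\<exists>M1>0. \<exists>M2>0. \<forall>\<alpha>>0. \<forall>v.
           visc_sol_DP \<alpha> H I k v \<and>
           (\<forall>x. \<forall>\<xi>\<in>I. \<bar>v x \<xi>\<bar> \<le> M / \<alpha>) \<and>
           (\<exists>L. \<forall>\<xi>\<in>I. L-lipschitz_on UNIV (\<lambda>x. v x \<xi>))
           \<longrightarrow> (\<forall>x y. \<forall>\<xi>\<in>I.
                 ereal \<bar>LINT \<eta>:I|lborel. k \<xi> \<eta> * (v x \<xi> - v y \<eta>)\<bar>
                   \<le> ereal M1 + ereal M2 * Linf_Dv I v)"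
proof -
  obtain C1 C2 m where C: "0 < C1" "0 < C2" "1 < m"
    and coercive: "\<forall>x p. \<forall>\<xi>\<in>I. C1 * norm p powr m - C2 \<le> H x p \<xi>"
    using B1 by blast
  define D where "D = real CARD('d)"
  define M1 where "M1 = max 1 (2 * M + k1 * (D + 2 * D * max 1
      (((C2 + 3 * M) / C1 + k1 / C1 * D + k1 / C1 * (2 * D)) powr (1 / (m - 1)))))"
  show ?thesis
  proof (rule exI[of _ M1], intro conjI exI[of _ "1::real"] zero_less_one allI impI ballI)
    show "0 < M1" by (simp add: M1_def)
    fix \<alpha> :: real and v :: "real^'d \<Rightarrow> real \<Rightarrow> real" and x y \<xi>
    assume "0 < \<alpha>" and "visc_sol_DP \<alpha> H I k v \<and> (\<forall>x. \<forall>\<xi>\<in>I. \<bar>v x \<xi>\<bar> \<le> M / \<alpha>) \<and>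
        (\<exists>L. \<forall>\<xi>\<in>I. L-lipschitz_on UNIV (\<lambda>x. v x \<xi>))" and "\<xi> \<in> I"
    then obtain L where "DP_solution I a b k k1 H M C1 C2 m \<alpha> v L"
      using DP_solutionI[OF meta_eq_to_obj_eq[OF I_def] I_len meta_eq_to_obj_eq[OF M_def]
          k_meas k0_pos k_bounds H_bdd C coercive] by blast
    then interpret DP_solution I a b k k1 H M C1 C2 m \<alpha> v L .
    have "\<bar>LINT \<eta>:I|lborel. k \<xi> \<eta> * (v x \<xi> - v y \<eta>)\<bar> \<le> M1"
      using abs_mixed_coupling_le_uniform[OF \<open>\<xi> \<in> I\<close>, of x y]
      unfolding mixed_coupling_def M1_def D_def by linarith
    moreover have "0 \<le> Linf_Dv I v"
      using I_len unfolding I_def by (intro Linf_Dv_nonneg) auto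
    ultimately show "ereal \<bar>LINT \<eta>:I|lborel. k \<xi> \<eta> * (v x \<xi> - v y \<eta>)\<bar>
        \<le> ereal M1 + ereal 1 * Linf_Dv I v"
      by (simp add: add_increasing2)
  qed
qed

end
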